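(* Let $Q\subseteq M$ be nonempty with $n=|Q|$, and let $a\in M$ minimize $\mathrm{med}(Q,z)=\sum_{q\in Q}d(q,z)$ over $z\in M$. Let $i\le i_{\mathrm{top}}$ be an integer and $y\in Y_i$ such that $\mathrm{med}(Q,y)\le 3n\,2^{i}$ and $\min_{z\in L_{y,i,7}}\mathrm{med}(Q,z)>3n\,2^{i-1}$. Then $\mathrm{med}(Q,a)>n\,2^{i-1}$, and consequently $\mathrm{med}(Q,y)<6\,\mathrm{med}(Q,a)$.
   Context: $(M,d)$ is a finite metric space with at least two points whose minimum interpoint distance is $1$; let $i_{\mathrm{top}}=\lceil\log_2\operatorname{diam}(M)\rceil$. Net hierarchy: $Y_0=M$, and for $i=1,\dots,i_{\mathrm{top}}$, $Y_i\subseteq Y_{i-1}$ is a $2^i$-net of $Y_{i-1}$, i.e. any two distinct points of $Y_i$ are at distance $\ge 2^i$ and every point of $Y_{i-1}$ is at distance $<2^i$ from some point of $Y_i$. By convention $Y_i=M$ for all integers $i<0$. For $y\in Y_i$ and $c\ge1$, the $c$-list is $L_{y,i,c}=\{z\in Y_{i-1}: d(y,z)\le c\,2^i\}$. *)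

theory Defs
  imports Complex_Main
begin

definition finite_metric :: "'a set \<Rightarrow> ('a \<Rightarrow> 'a \<Rightarrow> real) \<Rightarrow> bool" where
  "finite_metric M d \<longleftrightarrow> finite M \<and>
     (\<forall>x\<in>M. \<forall>y\<in>M. d x y \<ge> 0 \<and> (d x y = 0 \<longleftrightarrow> x = y) \<and> d x y = d y x) \<and>
     (\<forall>x\<in>M. \<forall>y\<in>M. \<forall>z\<in>M. d x z \<le> d x y + d y z)"

definition min_dist_one :: "'a set \<Rightarrow> ('a \<Rightarrow> 'a \<Rightarrow> real) \<Rightarrow> bool" where
  "min_dist_one M d \<longleftrightarrow> (\<forall>x\<in>M. \<forall>y\<in>M. x \<noteq> y \<longrightarrow> d x y \<ge> 1) \<and>
     (\<exists>x\<in>M. \<exists>y\<in>M. x \<noteq> y \<and> d x y = 1)"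

definition diam :: "'a set \<Rightarrow> ('a \<Rightarrow> 'a \<Rightarrow> real) \<Rightarrow> real" where
  "diam M d = Max {d x y | x y. x \<in> M \<and> y \<in> M}"

definition i_top :: "'a set \<Rightarrow> ('a \<Rightarrow> 'a \<Rightarrow> real) \<Rightarrow> int" where
  "i_top M d = \<lceil>log 2 (diam M d)\<rceil>"

definition net_hierarchy :: "'a set \<Rightarrow> ('a \<Rightarrow> 'a \<Rightarrow> real) \<Rightarrow> (int \<Rightarrow> 'a set) \<Rightarrow> bool" where
  "net_hierarchy M d Y \<longleftrightarrow>
     (\<forall>i::int. i \<le> 0 \<longrightarrow> Y i = M) \<and>
     (\<forall>i::int. 1 \<le> i \<and> i \<le> i_top M d \<longrightarrow>
        Y i \<subseteq> Y (i - 1) \<and>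
        (\<forall>x\<in>Y i. \<forall>x'\<in>Y i. x \<noteq> x' \<longrightarrow> d x x' \<ge> 2 powr (real_of_int i)) \<and>
        (\<forall>z\<in>Y (i - 1). \<exists>x\<in>Y i. d z x < 2 powr (real_of_int i)))"

definition clist :: "('a \<Rightarrow> 'a \<Rightarrow> real) \<Rightarrow> (int \<Rightarrow> 'a set) \<Rightarrow> 'a \<Rightarrow> int \<Rightarrow> real \<Rightarrow> 'a set" where
  "clist d Y y i c = {z \<in> Y (i - 1). d y z \<le> c * 2 powr (real_of_int i)}"

definition med :: "('a \<Rightarrow> 'a \<Rightarrow> real) \<Rightarrow> 'a set \<Rightarrow> 'a \<Rightarrow> real" where
  "med d Q z = (\<Sum>q\<in>Q. d q z)"

end

theory Submission
  imports Defs
begin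

(*
  Write P = 2^i and assume, for contradiction, med(Q,a) \<le> n P/2.
  Since every point of Q is close to both y and a on average, the triangle
  inequality summed over Q gives  n d(y,a) \<le> med(Q,y) + med(Q,a) \<le> 3.5 n P,
  so d(y,a) \<le> 3.5 P.  The net hierarchy covers M at every scale: there is a
  point z of Y_(i-1) with d(a,z) < 2^i = P.  Then d(y,z) < 4.5 P \<le> 7 P, so z lies
  in the 7-list of y, whereas moving the centre from a to z costs at most n P,
  i.e. med(Q,z) \<le> med(Q,a) + n P \<le> 1.5 n P, contradicting the list hypothesis.
  Hence med(Q,a) > n P/2 \<ge> med(Q,y)/6.
*)

lemma net_level_subset:
  assumes nh: "net_hierarchy M d Y" and j: "j \<le> i_top M d"
  shows "Y j \<subseteq> M"
proof (cases "j \<le> 0")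
  case True
  then show ?thesis using nh unfolding net_hierarchy_def by auto
next
  case False
  have levels: "int k \<le> i_top M d \<Longrightarrow> Y (int k) \<subseteq> M" for k
  proof (induction k)
    case 0
    then show ?case using nh unfolding net_hierarchy_def by auto
  next
    case (Suc k)
    have "1 \<le> int (Suc k)" by simp
    then have "Y (int (Suc k)) \<subseteq> Y (int (Suc k) - 1)"
      using nh Suc.prems unfolding net_hierarchy_def by blast
    then show ?case using Suc by auto
  qed
  have "j = int (nat j)" using False by simp
  then show ?thesis using levels[of "nat j"] j by simp
qed

text \<open>Following the nets upwards from level 0 to level k, a point of M moves
  by less than 2 + 4 + ... + 2^k = 2^(k+1) - 2 in total.\<close>

lemma net_chain_distance:
  assumes fm: "finite_metric M d" and nh: "net_hierarchy M d Y" and x: "x \<in> M"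
  shows "int k \<le> i_top M d \<Longrightarrow> \<exists>z\<in>Y (int k). d x z \<le> 2^(k+1) - 2"
proof (induction k)
  case 0
  have "Y 0 = M" using nh unfolding net_hierarchy_def by auto
  moreover have "d x x = 0" using x fm unfolding finite_metric_def by auto
  ultimately show ?case using x by (intro bexI[of _ x]) auto
next
  case (Suc k)
  then obtain z where z: "z \<in> Y (int k)" "d x z \<le> 2^(k+1) - 2" by auto
  have "1 \<le> int (Suc k)" by simp
  then have "\<forall>z\<in>Y (int (Suc k) - 1). \<exists>x\<in>Y (int (Suc k)).
      d z x < 2 powr real_of_int (int (Suc k))"
    using nh Suc.prems unfolding net_hierarchy_def by blast
  then obtain z' where z': "z' \<in> Y (int (Suc k))" "d z z' < 2 powr real_of_int (int (Suc k))"
    using z(1) by auto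
  have step: "2 powr real_of_int (int (Suc k)) = (2::real) ^ Suc k"
    by (metis of_int_of_nat_eq powr_realpow zero_less_numeral)
  have "z \<in> M" "z' \<in> M"
    using net_level_subset[OF nh, of "int k"] net_level_subset[OF nh, of "int (Suc k)"]
      Suc.prems z(1) z'(1) by auto
  then have "d x z' \<le> d x z + d z z'" using fm x unfolding finite_metric_def by auto
  then have "d x z' \<le> 2^(Suc k + 1) - 2" using z z' step by simp
  then show ?case using z' by auto
qed

lemma net_cover_below:
  assumes fm: "finite_metric M d" and nh: "net_hierarchy M d Y"
    and x: "x \<in> M" and i: "i \<le> i_top M d"
  shows "\<exists>z\<in>Y (i - 1). d x z < 2 powr real_of_int i"
proof (cases "i \<le> 0")
  case True
  then have "Y (i - 1) = M" using nh unfolding net_hierarchy_def by auto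
  moreover have "d x x = 0" using fm x unfolding finite_metric_def by auto
  ultimately show ?thesis using x by (intro bexI[of _ x]) auto
next
  case False
  define k where "k = nat (i - 1)"
  have k: "i - 1 = int k" "real (k + 1) = real_of_int i" using False by (auto simp: k_def)
  obtain z where "z \<in> Y (int k)" "d x z \<le> 2^(k+1) - 2"
    using net_chain_distance[OF fm nh x, of k] i k(1) by auto
  moreover have "(2::real)^(k+1) = 2 powr real_of_int i"
    by (metis k(2) powr_realpow zero_less_numeral)
  ultimately show ?thesis using k(1) by (intro bexI[of _ z]) auto
qed

lemma med_move_centre:
  assumes fm: "finite_metric M d" and QM: "Q \<subseteq> M" and "a \<in> M" "z \<in> M"
  shows "med d Q z \<le> med d Q a + real (card Q) * d a z"
proof -
  have "med d Q z \<le> (\<Sum>q\<in>Q. d q a + d a z)"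
    unfolding med_def
    by (rule sum_mono) (use fm QM assms(3,4) in \<open>auto simp: finite_metric_def\<close>)
  also have "\<dots> = med d Q a + real (card Q) * d a z"
    by (simp add: sum.distrib med_def)
  finally show ?thesis .
qed

lemma med_centres_close:
  assumes fm: "finite_metric M d" and QM: "Q \<subseteq> M" and "y \<in> M" "a \<in> M"
  shows "real (card Q) * d y a \<le> med d Q y + med d Q a"
proof -
  have "real (card Q) * d y a = (\<Sum>q\<in>Q. d y a)" by simp
  also have "\<dots> \<le> (\<Sum>q\<in>Q. d q y + d q a)"
  proof (rule sum_mono)
    fix q assume "q \<in> Q"
    then have "q \<in> M" using QM by auto
    then have "d y a \<le> d y q + d q a" "d y q = d q y"
      using fm assms(3,4) unfolding finite_metric_def by blast+
    then show "d y a \<le> d q y + d q a" by simp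
  qed
  also have "\<dots> = med d Q y + med d Q a" by (simp add: sum.distrib med_def)
  finally show ?thesis .
qed

theorem mainTheorem5:
  fixes M :: "'a set" and d :: "'a \<Rightarrow> 'a \<Rightarrow> real" and Y :: "int \<Rightarrow> 'a set"
    and Q :: "'a set" and a y :: 'a and i :: int and n :: nat
  assumes "finite_metric M d" and "min_dist_one M d"
    and "net_hierarchy M d Y"
    and "Q \<subseteq> M" and "Q \<noteq> {}" and "n = card Q"
    and "a \<in> M" and "\<forall>z\<in>M. med d Q a \<le> med d Q z"
    and "i \<le> i_top M d" and "y \<in> Y i"
    and "med d Q y \<le> 3 * real n * 2 powr (real_of_int i)"
    and "\<forall>z\<in>clist d Y y i 7. med d Q z > 3 * real n * 2 powr (real_of_int (i - 1))"
  shows "med d Q a > real n * 2 powr (real_of_int (i - 1)) \<and> med d Q y < 6 * med d Q a"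
proof -
  note fm = assms(1) and nh = assms(3)
  define P where "P = 2 powr real_of_int i"
  have P_pos: "P > 0" unfolding P_def by simp
  have half: "2 powr real_of_int (i - 1) = P / 2" unfolding P_def by (simp add: powr_diff)
  have "finite Q" using fm assms(4) finite_subset unfolding finite_metric_def by auto
  then have n_pos: "real n > 0" using assms(5,6) by (simp add: card_gt_0_iff)
  have yM: "y \<in> M" using net_level_subset[OF nh assms(9)] assms(10) by auto
  obtain z where z: "z \<in> Y (i - 1)" "d a z < P"
    using net_cover_below[OF fm nh assms(7,9)] unfolding P_def by auto
  have zM: "z \<in> M" using net_level_subset[OF nh, of "i - 1"] assms(9) z(1) by auto
  have a_large: "med d Q a > real n * (P / 2)"
  proof (rule ccontr)
    assume "\<not> ?thesis"
    then have a_small: "med d Q a \<le> real n * (P / 2)" by simp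
    have "real n * d y a \<le> real n * (7 * P / 2)"
      using med_centres_close[OF fm assms(4) yM assms(7)] a_small assms(6,11)
      unfolding P_def by (simp add: algebra_simps)
    then have "d y a \<le> 7 * P / 2" using n_pos by simp
    moreover have "d y z \<le> d y a + d a z"
      using fm yM assms(7) zM unfolding finite_metric_def by blast
    ultimately have "d y z \<le> 7 * P" using z(2) P_pos by simp
    then have "z \<in> clist d Y y i 7" using z(1) unfolding clist_def P_def by simp
    then have z_large: "med d Q z > 3 * real n * (P / 2)" using assms(12) half by auto
    have "real n * d a z \<le> real n * P" using z(2) n_pos by simp
    then have "med d Q z \<le> med d Q a + real n * P"
      using med_move_centre[OF fm assms(4,7) zM] assms(6) by simp
    with z_large a_small show False by simp
  qed
  moreover have "med d Q y < 6 * med d Q a"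
    using a_large assms(11) unfolding P_def by simp
  ultimately show ?thesis unfolding half by simp
qed

end
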